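(* Let $\Sigma=(\sigma_0,\sigma_\infty,\sigma_1,\tau)$ be a special admissible 4-tuple in $S_{2n}^4$ such that $\sigma_1\tau$ contains the 4-cycle $(2n-h,h,k_1,k_2)$ with $h<k_1<k_2<2n-h$. If $n$ is even, $k_1=n-h$ and $k_2=n+h$, then the conjugacy class of $\Sigma$ contains exactly two special admissible 4-tuples; otherwise it contains exactly four.
   Context: Permutation products are read left to right. An admissible 4-tuple is $(\sigma_0,\sigma_\infty,\sigma_1,\tau)\in S_{2n}^4$ with $\sigma_0$ a product of $n$ disjoint transpositions, $\sigma_\infty$ a $2n$-cycle, $\sigma_1$ a product of $n-2$ disjoint transpositions, $\tau$ a transposition, and $\sigma_0\sigma_\infty\sigma_1\tau=\mathrm{id}$. It is special if $\sigma_\infty=(2n,2n-1,\dots,1)$ and $\sigma_1(2n)=\tau(2n)=2n$. Conjugacy means simultaneous conjugation by some $\gamma\in S_{2n}$. *)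

theory Defs
  imports "HOL-Combinatorics.Combinatorics"
begin

text \<open>Permutations of {1..2n} are functions nat => nat permuting {1..2*n}.
  Products are read left to right: the product p q means "first p, then q",
  i.e. the function q o p.\<close>

type_synonym tuple4 = "(nat \<Rightarrow> nat) \<times> (nat \<Rightarrow> nat) \<times> (nat \<Rightarrow> nat) \<times> (nat \<Rightarrow> nat)"

definition prod_disj_transp :: "nat \<Rightarrow> nat \<Rightarrow> (nat \<Rightarrow> nat) \<Rightarrow> bool" where
  "prod_disj_transp n k \<sigma> \<longleftrightarrow> \<sigma> permutes {1..2*n} \<and> \<sigma> \<circ> \<sigma> = id
     \<and> card {x \<in> {1..2*n}. \<sigma> x \<noteq> x} = 2 * k"

definition full_cycle :: "nat \<Rightarrow> (nat \<Rightarrow> nat) \<Rightarrow> bool" where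
  "full_cycle n \<sigma> \<longleftrightarrow> (\<exists>xs. distinct xs \<and> set xs = {1..2*n} \<and> \<sigma> = cycle_of_list xs)"

definition is_transp :: "nat \<Rightarrow> (nat \<Rightarrow> nat) \<Rightarrow> bool" where
  "is_transp n \<tau> \<longleftrightarrow> (\<exists>a\<in>{1..2*n}. \<exists>b\<in>{1..2*n}. a \<noteq> b \<and> \<tau> = transpose a b)"

definition admissible :: "nat \<Rightarrow> tuple4 \<Rightarrow> bool" where
  "admissible n \<Sigma> \<longleftrightarrow> (case \<Sigma> of (s0, sinf, s1, t) \<Rightarrow>
     prod_disj_transp n n s0 \<and> full_cycle n sinf \<and> prod_disj_transp n (n - 2) s1
     \<and> is_transp n t \<and> t \<circ> s1 \<circ> sinf \<circ> s0 = id)"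

definition std_cycle :: "nat \<Rightarrow> nat \<Rightarrow> nat" where
  "std_cycle n x = (if x = 1 then 2*n else if 2 \<le> x \<and> x \<le> 2*n then x - 1 else x)"

definition special :: "nat \<Rightarrow> tuple4 \<Rightarrow> bool" where
  "special n \<Sigma> \<longleftrightarrow> admissible n \<Sigma> \<and> (case \<Sigma> of (s0, sinf, s1, t) \<Rightarrow>
     sinf = std_cycle n \<and> s1 (2*n) = 2*n \<and> t (2*n) = 2*n)"

definition conj4 :: "(nat \<Rightarrow> nat) \<Rightarrow> tuple4 \<Rightarrow> tuple4" where
  "conj4 \<gamma> \<Sigma> = (case \<Sigma> of (s0, sinf, s1, t) \<Rightarrow>
     (inv \<gamma> \<circ> s0 \<circ> \<gamma>, inv \<gamma> \<circ> sinf \<circ> \<gamma>, inv \<gamma> \<circ> s1 \<circ> \<gamma>, inv \<gamma> \<circ> t \<circ> \<gamma>))"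

definition conj_class :: "nat \<Rightarrow> tuple4 \<Rightarrow> tuple4 set" where
  "conj_class n \<Sigma> = {conj4 \<gamma> \<Sigma> | \<gamma>. \<gamma> permutes {1..2*n}}"

end

theory Submission
  imports Defs
begin

(* Since sigma_inf = (2n, ..., 1) is the rotation x |-> x - 1 of {1..2n}, a conjugation that keeps
   the tuple special commutes with it and is therefore a rotation rot n c; the conditions at 2n
   say that c is a common fixed point of sigma_1 and tau. There are exactly four of these, because
   tau swaps two opposite points of the 4-cycle, both moved by sigma_1. Two such conjugates agree
   iff rotating by c' - c centralizes the tuple, and commuting with tau leaves only the identity
   and the half turn rot n n. So the class holds four special tuples, or two if the half turn
   centralizes the tuple.
   The relation tau sigma_1 = sigma_0 rot_1 shows that sigma_0 reverses each arc between
   consecutive points of the 4-cycle. Hence the half turn centralizes the tuple exactly when it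
   preserves the 4-cycle, i.e. k1 = n - h and k2 = n + h; and the arc from h to k1 has even length
   because sigma_0 is fixed-point free, which makes n even. *)

section \<open>Rotations of {1..2n}\<close>

definition rot :: "nat \<Rightarrow> nat \<Rightarrow> nat \<Rightarrow> nat" where
  "rot n j x = (if x \<in> {1..2*n} then (x - 1 + j) mod (2*n) + 1 else x)"

lemma rot_in: "x \<in> {1..2*n} \<Longrightarrow> rot n j x \<in> {1..2*n}"
  unfolding rot_def by (auto intro!: Suc_leI)

lemma rot_out: "x \<notin> {1..2*n} \<Longrightarrow> rot n j x = x"
  unfolding rot_def by auto

lemma rot_rot: "rot n i (rot n j x) = rot n (i + j) x"
proof (cases "x \<in> {1..2*n}")
  case True
  have "((x - 1 + j) mod (2*n) + 1 - 1 + i) mod (2*n) = (i + (x - 1 + j) mod (2*n)) mod (2*n)"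
    by (simp add: add.commute)
  also have "\<dots> = (x - 1 + (i + j)) mod (2*n)"
    by (simp add: mod_add_right_eq ac_simps)
  finally show ?thesis
    using True rot_in[OF True] unfolding rot_def by simp
qed (simp add: rot_out)

lemma rot_comp: "rot n i \<circ> rot n j = rot n (i + j)"
  by (simp add: fun_eq_iff rot_rot)

lemma rot_commute: "rot n i \<circ> rot n j = rot n j \<circ> rot n i"
  by (simp add: rot_comp add.commute)

lemma rot_mod: "rot n (j mod (2*n)) = rot n j"
proof
  fix x
  have "(x - 1 + j mod (2*n)) mod (2*n) = (x - 1 + j) mod (2*n)"
    by (simp add: mod_add_right_eq)
  then show "rot n (j mod (2*n)) x = rot n j x"
    unfolding rot_def by (simp only: if_cancel split: if_split)
qed

lemma rot_0: "rot n 0 = id"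
  unfolding rot_def by (auto simp: fun_eq_iff)

lemma rot_2n_add: "rot n (2*n + j) = rot n j"
  by (metis rot_mod mod_add_self1)

lemma rot_2n: "rot n (2*n) = id"
  using rot_2n_add[of n 0] by (simp add: rot_0)

lemma rot_inv: "j \<le> 2*n \<Longrightarrow> inv (rot n j) = rot n (2*n - j)"
  by (rule inv_unique_comp) (simp_all add: rot_comp rot_2n)

lemma rot_permutes: "rot n j permutes {1..2*n}"
proof -
  have "rot n j = rot n (j mod (2*n))" by (simp add: rot_mod)
  moreover have "bij (rot n (j mod (2*n)))"
  proof (cases "n = 0")
    case False
    then have "rot n (2*n - j mod (2*n)) \<circ> rot n (j mod (2*n)) = id"
      "rot n (j mod (2*n)) \<circ> rot n (2*n - j mod (2*n)) = id"
      by (simp_all add: rot_comp rot_2n less_imp_le_nat)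
    then show ?thesis by (rule o_bij)
  next
    case True
    then have "rot n (j mod (2*n)) = id" unfolding rot_def by (simp add: fun_eq_iff)
    then show ?thesis by simp
  qed
  ultimately show ?thesis
    unfolding permutes_def by (simp add: rot_out) (metis bij_pointE)
qed

lemma rot_apply:
  assumes "p \<in> {1..2*n}" "i \<le> 2*n"
  shows "rot n i p = (if p + i \<le> 2*n then p + i else p + i - 2*n)"
proof (cases "p + i \<le> 2*n")
  case False
  then have "p - 1 + i = (p + i - 2*n - 1) + 1 * (2*n)" using assms by auto
  then have "(p - 1 + i) mod (2*n) = (p + i - 2*n - 1) mod (2*n)"
    by (metis mod_mult_self1)
  also have "\<dots> = p + i - 2*n - 1" using assms False by simp
  finally show ?thesis using assms False unfolding rot_def by simp
qed (use assms in \<open>simp add: rot_def\<close>)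

lemma rot_eqI:
  assumes "1 \<le> p" "p \<le> 2*n" "i \<le> 2*n" "p + i = x \<and> x \<le> 2*n \<or> p + i = x + 2*n \<and> 1 \<le> x"
  shows "rot n i p = x"
  using rot_apply[of p n i] assms by auto

lemma rot_top: "c \<in> {1..2*n} \<Longrightarrow> rot n c (2*n) = c"
  using rot_apply[of "2*n" n c] by auto

lemma rot_shift: "c \<in> {1..2*n} \<Longrightarrow> c' \<in> {1..2*n} \<Longrightarrow> rot n (c' + (2*n - c)) c = c'"
proof -
  assume c: "c \<in> {1..2*n}" and c': "c' \<in> {1..2*n}"
  then have "rot n (2*n - c) c = 2*n" using rot_apply[OF c, of "2*n - c"] by simp
  then show ?thesis using rot_top[OF c'] by (simp flip: rot_rot)
qed

lemma rot_eq_if_agree: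
  assumes a: "a \<in> {1..2*n}" and agree: "rot n i a = rot n j a"
  shows "rot n i = rot n j"
proof
  fix x show "rot n i x = rot n j x"
  proof (cases "x \<in> {1..2*n}")
    case True
    then have "x = rot n (x + (2*n - a)) a" using rot_shift[OF a] by simp
    then show ?thesis using agree by (metis rot_rot add.commute)
  qed (simp add: rot_out)
qed

lemma std_cycle_eq_rot: "0 < n \<Longrightarrow> std_cycle n = rot n (2*n - 1)"
  by (auto simp: fun_eq_iff std_cycle_def rot_apply rot_out)

lemma std_cycle_rot_1: "0 < n \<Longrightarrow> std_cycle n (rot n 1 x) = x"
  by (simp add: std_cycle_eq_rot rot_rot rot_2n)

lemma rot_half_turn_involution: "rot n n (rot n n x) = x"
  by (simp add: rot_rot rot_2n flip: mult_2)

lemma rot_half_turn_moves: "x \<in> {1..2*n} \<Longrightarrow> rot n n x \<noteq> x"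
  using rot_apply[of x n n] by auto

lemma rot_involution_cases:
  assumes n: "0 < n" and invol: "rot n j (rot n j (2*n)) = 2*n"
  shows "rot n j = id \<or> rot n j = rot n n"
proof -
  define e where "e = j mod (2*n)"
  have r: "rot n j = rot n e" unfolding e_def by (simp add: rot_mod)
  show ?thesis
  proof (cases "e = 0")
    case False
    have e_less: "e < 2*n" using n unfolding e_def by simp
    with False have eD: "e \<in> {1..2*n}" by simp
    then have "rot n e e = 2*n" using invol r rot_top by simp
    then have "e = n" using rot_apply[OF eD, of e] e_less by (auto split: if_splits)
    then show ?thesis using r by simp
  qed (simp add: r rot_0)
qed

lemma commute_std_cycle_imp_rot:
  assumes g: "\<gamma> permutes {1..2*n}" and n: "0 < n"
    and comm: "\<gamma> \<circ> std_cycle n = std_cycle n \<circ> \<gamma>"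
  shows "\<gamma> = rot n (\<gamma> (2*n))"
proof -
  let ?c = "\<gamma> (2*n)"
  have "?c \<in> {1..2*n}" using permutes_in_image[OF g] n by simp
  then have top: "\<gamma> (2*n) = rot n ?c (2*n)" by (simp add: rot_top)
  have step: "\<gamma> (std_cycle n x) = std_cycle n (\<gamma> x)"
    "rot n ?c (std_cycle n x) = std_cycle n (rot n ?c x)" for x
    using comm by (metis comp_apply, simp add: std_cycle_eq_rot[OF n] rot_rot add.commute)
  have "\<gamma> (2*n - k) = rot n ?c (2*n - k)" if "k < 2*n" for k
    using that
  proof (induction k)
    case (Suc k)
    then have "2*n - Suc k = std_cycle n (2*n - k)" by (auto simp: std_cycle_def)
    then show ?case using Suc step by simp
  qed (use top in simp)
  then have "\<gamma> x = rot n ?c x" if "x \<in> {1..2*n}" for x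
    using that[unfolded atLeastAtMost_iff] by (metis diff_diff_cancel diff_less less_le_trans zero_less_one)
  moreover have "\<gamma> x = rot n ?c x" if "x \<notin> {1..2*n}" for x
    using that g by (simp add: permutes_not_in rot_out)
  ultimately show ?thesis by blast
qed

section \<open>Conjugation\<close>

lemma conj_apply_eq_iff: "\<gamma> permutes D \<Longrightarrow> (inv \<gamma> \<circ> \<sigma> \<circ> \<gamma>) x = y \<longleftrightarrow> \<sigma> (\<gamma> x) = \<gamma> y"
  by (auto simp: permutes_inv_eq)

lemma card_moved_conj:
  assumes g: "\<gamma> permutes D"
  shows "card {x\<in>D. (inv \<gamma> \<circ> \<sigma> \<circ> \<gamma>) x \<noteq> x} = card {x\<in>D. \<sigma> x \<noteq> x}"
proof -
  have "\<gamma> ` {x\<in>D. (inv \<gamma> \<circ> \<sigma> \<circ> \<gamma>) x \<noteq> x} = {x\<in>D. \<sigma> x \<noteq> x}"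
  proof (intro equalityI subsetI)
    fix y assume y: "y \<in> {x\<in>D. \<sigma> x \<noteq> x}"
    show "y \<in> \<gamma> ` {x\<in>D. (inv \<gamma> \<circ> \<sigma> \<circ> \<gamma>) x \<noteq> x}"
    proof (rule image_eqI[where x = "inv \<gamma> y"])
      show "inv \<gamma> y \<in> {x\<in>D. (inv \<gamma> \<circ> \<sigma> \<circ> \<gamma>) x \<noteq> x}"
        using y g
        by (auto simp: permutes_inv_eq[OF g] permutes_inverses[OF g] permutes_in_image[OF permutes_inv])
    qed (simp add: permutes_inverses[OF g])
  qed (use g in \<open>auto simp: conj_apply_eq_iff[OF g] permutes_in_image permutes_inverses\<close>)
  moreover have "inj_on \<gamma> {x\<in>D. (inv \<gamma> \<circ> \<sigma> \<circ> \<gamma>) x \<noteq> x}"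
    using g permutes_inj inj_on_subset by blast
  ultimately show ?thesis using card_image by fastforce
qed

lemma prod_disj_transp_conj:
  assumes g: "\<gamma> permutes {1..2*n}" and p: "prod_disj_transp n k \<sigma>"
  shows "prod_disj_transp n k (inv \<gamma> \<circ> \<sigma> \<circ> \<gamma>)"
proof -
  have "\<sigma> (\<sigma> x) = x" for x using p unfolding prod_disj_transp_def by (metis comp_apply id_apply)
  then have "(inv \<gamma> \<circ> \<sigma> \<circ> \<gamma>) \<circ> (inv \<gamma> \<circ> \<sigma> \<circ> \<gamma>) = id"
    using g by (simp add: fun_eq_iff permutes_inverses)
  with p show ?thesis unfolding prod_disj_transp_def
    using g card_moved_conj[OF g] by (simp add: permutes_compose permutes_inv)
qed

lemma is_transp_conj:
  assumes g: "\<gamma> permutes {1..2*n}" and p: "is_transp n \<tau>"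
  shows "is_transp n (inv \<gamma> \<circ> \<tau> \<circ> \<gamma>)"
proof -
  obtain a b where ab: "a \<in> {1..2*n}" "b \<in> {1..2*n}" "a \<noteq> b" "\<tau> = transpose a b"
    using p unfolding is_transp_def by blast
  have "inv \<gamma> \<circ> \<tau> \<circ> \<gamma> = transpose (inv \<gamma> a) (inv \<gamma> b)"
    using g ab(4) by (auto simp: fun_eq_iff transpose_def permutes_inverses permutes_inv_eq)
  moreover have "inv \<gamma> a \<in> {1..2*n}" "inv \<gamma> b \<in> {1..2*n}" "inv \<gamma> a \<noteq> inv \<gamma> b"
    using ab g permutes_in_image[OF permutes_inv[OF g]]
    by (auto simp: permutes_inv_eq[OF g] permutes_inverses[OF g])
  ultimately show ?thesis unfolding is_transp_def by blast
qed

lemma conj_eq_iff_commute: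
  assumes "bij \<gamma>" "bij \<gamma>'"
  shows "inv \<gamma> \<circ> \<sigma> \<circ> \<gamma> = inv \<gamma>' \<circ> \<sigma> \<circ> \<gamma>' \<longleftrightarrow> (\<gamma>' \<circ> inv \<gamma>) \<circ> \<sigma> = \<sigma> \<circ> (\<gamma>' \<circ> inv \<gamma>)"
  using assms
  by (auto simp: fun_eq_iff bij_inv_eq_iff bij_is_surj surj_f_inv_f)
    (metis bij_inv_eq_iff, metis bij_inv_eq_iff)

lemma special_conj_rot:
  assumes sp: "special n (s0, sinf, s1, t)" and c: "c \<in> {1..2*n}" "s1 c = c" "t c = c"
  shows "special n (conj4 (rot n c) (s0, sinf, s1, t))"
proof -
  let ?g = "rot n c"
  have g: "?g permutes {1..2*n}" by (rule rot_permutes)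
  from sp have "admissible n (s0, sinf, s1, t)" and sinf: "sinf = std_cycle n"
    unfolding special_def prod.case by blast+
  then have ad: "prod_disj_transp n n s0" "full_cycle n sinf" "prod_disj_transp n (n - 2) s1"
    "is_transp n t" "t \<circ> s1 \<circ> sinf \<circ> s0 = id"
    unfolding admissible_def by simp_all
  have "sinf (?g x) = ?g (sinf x)" for x
    using c(1) by (simp add: sinf std_cycle_eq_rot rot_rot add.commute)
  then have "inv ?g \<circ> sinf \<circ> ?g = sinf"
    by (simp add: fun_eq_iff permutes_inverses[OF g])
  moreover have "(inv ?g \<circ> t \<circ> ?g) \<circ> (inv ?g \<circ> s1 \<circ> ?g) \<circ> (inv ?g \<circ> sinf \<circ> ?g) \<circ> (inv ?g \<circ> s0 \<circ> ?g) = id"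
    using ad(5) g by (simp add: fun_eq_iff permutes_inverses)
  moreover have "(inv ?g \<circ> s1 \<circ> ?g) (2*n) = 2*n" "(inv ?g \<circ> t \<circ> ?g) (2*n) = 2*n"
    using c rot_top[OF c(1)] by (auto simp: permutes_inv_eq[OF g])
  ultimately show ?thesis using ad sinf prod_disj_transp_conj[OF g] is_transp_conj[OF g]
    unfolding special_def admissible_def conj4_def by simp
qed

lemma rot_conj_eq_iff_commute:
  assumes "c \<in> {1..2*n}" "c' \<in> {1..2*n}"
  shows "inv (rot n c) \<circ> \<sigma> \<circ> rot n c = inv (rot n c') \<circ> \<sigma> \<circ> rot n c'
     \<longleftrightarrow> rot n (c' + (2*n - c)) \<circ> \<sigma> = \<sigma> \<circ> rot n (c' + (2*n - c))"
proof -
  have "rot n c' \<circ> inv (rot n c) = rot n (c' + (2*n - c))"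
    using assms by (simp add: rot_inv rot_comp)
  then show ?thesis
    using conj_eq_iff_commute[OF permutes_bij permutes_bij, OF rot_permutes rot_permutes] by metis
qed

section \<open>Involutions, transpositions and reversed arcs\<close>

lemma commute_transpose_swaps:
  assumes "inj R" and comm: "\<And>x. R (transpose a b x) = transpose a b (R x)"
    and "R a \<noteq> a" "a \<noteq> b"
  shows "R a = b"
proof (rule ccontr)
  assume "R a \<noteq> b"
  then have "R b = R a" using comm[of a] assms(3) by simp
  then show False using assms by (simp add: inj_eq)
qed

lemma swap_commutes_transpose:
  assumes invol: "\<And>x. R (R x) = x" and "R a = b" "R b = a"
  shows "R (transpose a b x) = transpose a b (R x)"
proof (cases "x \<in> {a, b}")
  case False
  moreover have "R x \<noteq> a" "R x \<noteq> b"
    using False assms(2,3) invol by (metis insertCI)+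
  ultimately show ?thesis by simp
qed (use assms in auto)

lemma rot_commute_transpose_cases:
  assumes n: "0 < n" and ab: "a \<in> {1..2*n}" "b \<in> {1..2*n}" "a \<noteq> b"
    and comm: "rot n d \<circ> transpose a b = transpose a b \<circ> rot n d"
  shows "rot n d = id \<or> rot n d = rot n n"
proof (cases "rot n d a = a")
  case True
  then show ?thesis using rot_eq_if_agree[OF ab(1), of d 0] by (simp add: rot_0)
next
  case False
  have inj: "inj (rot n d)" using rot_permutes permutes_inj by blast
  have comm': "rot n d (transpose a b x) = transpose a b (rot n d x)"
    "rot n d (transpose b a x) = transpose b a (rot n d x)" for x
    using comm by (metis comp_apply transpose_commute)+
  have da: "rot n d a = b" by (rule commute_transpose_swaps[OF inj comm'(1) False ab(3)])
  then have "rot n d b \<noteq> b"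
    using rot_eq_if_agree[OF ab(2), of d 0] ab(3) by (auto simp: rot_0)
  then have "rot n d b = a" using commute_transpose_swaps[OF inj comm'(2)] ab(3) by simp
  then have "rot n (d + d) a = rot n 0 a" using da by (simp add: rot_0 flip: rot_rot)
  then have "rot n (d + d) = rot n 0" by (rule rot_eq_if_agree[OF ab(1)])
  then have "rot n (d + d) = id" by (simp add: rot_0)
  then have "rot n d (rot n d (2*n)) = 2*n" by (simp add: rot_rot)
  then show ?thesis by (rule rot_involution_cases[OF n])
qed

lemma involution_transpose_path:
  assumes invol: "\<And>x. s (s x) = x"
    and "transpose a b (s x) = y" "transpose a b (s y) = z" "y \<notin> {a, b}" "x \<noteq> z"
  shows "{a, b} = {x, z}"
proof -
  have "s y = x" using assms(2,4) invol by (metis transpose_eq_iff insertCI)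
  then show ?thesis using assms(3,5) by (auto simp: transpose_def split: if_splits)
qed

lemma transpose_of_four_cycle:
  assumes invol: "\<And>x. s (s x) = x" and "distinct [p0, p1, p2, p3]"
    and "transpose a b (s p0) = p1" "transpose a b (s p1) = p2"
    "transpose a b (s p2) = p3" "transpose a b (s p3) = p0"
  shows "{a, b} = {p0, p2} \<or> {a, b} = {p1, p3}"
proof -
  have "\<not> (p1 \<in> {a, b} \<and> p2 \<in> {a, b} \<and> p3 \<in> {a, b})" using assms(2) by auto
  then consider "p1 \<notin> {a, b}" | "p2 \<notin> {a, b}" | "p3 \<notin> {a, b}" by blast
  then show ?thesis
  proof cases
    case 1
    have "{a, b} = {p0, p2}"
      by (rule involution_transpose_path[OF invol assms(3,4) 1]) (use assms(2) in simp)
    then show ?thesis ..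
  next
    case 2
    have "{a, b} = {p1, p3}"
      by (rule involution_transpose_path[OF invol assms(4,5) 2]) (use assms(2) in simp)
    then show ?thesis ..
  next
    case 3
    have "{a, b} = {p2, p0}"
      by (rule involution_transpose_path[OF invol assms(5,6) 3]) (use assms(2) in auto)
    then show ?thesis by auto
  qed
qed

lemma involution_off_four_cycle:
  assumes invol: "\<And>x. s (s x) = x" and ab: "{a, b} \<subseteq> {p0, p1, p2, p3}"
    and cycle: "transpose a b (s p0) = p1" "transpose a b (s p1) = p2"
      "transpose a b (s p2) = p3" "transpose a b (s p3) = p0"
    and z: "z \<notin> {p0, p1, p2, p3}"
  shows "transpose a b (s (transpose a b (s z))) = z"
proof -
  have inj: "inj (\<lambda>x. transpose a b (s x))"
    by (rule injI) (metis invol transpose_involutory)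
  have "{p0, p1, p2, p3} = (\<lambda>x. transpose a b (s x)) ` {p0, p1, p2, p3}"
    using cycle by auto
  then have "transpose a b (s z) \<notin> {p0, p1, p2, p3}"
    using z inj_image_mem_iff[OF inj] by (metis (no_types, lifting))
  then have "s z \<notin> {a, b}" using ab by auto
  then show ?thesis using z ab invol by auto
qed

(* off says that s \<circ> rot n 1 is an involution away from C; the reversal spreads from the two
   ends of the arc towards its middle. *)
lemma involution_reverses_arc:
  assumes invol: "\<And>x. s (s x) = x"
    and off: "\<And>z. z \<in> {1..2*n} \<Longrightarrow> z \<notin> C \<Longrightarrow> s (rot n 1 (s (rot n 1 z))) = z"
    and p: "p \<in> {1..2*n}" and start: "s (rot n 1 p) = rot n m p"
    and inside: "\<And>i. 1 \<le> i \<Longrightarrow> i < m \<Longrightarrow> rot n i p \<notin> C"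
    and i: "1 \<le> i" "i \<le> m"
  shows "s (rot n i p) = rot n (m + 1 - i) p"
proof -
  have rot_1_inj: "rot n 1 x = rot n 1 y \<Longrightarrow> x = y" for x y
    using permutes_inj[OF rot_permutes] by (metis injD)
  have from_ends: "s (rot n (1 + j) p) = rot n (m - j) p" if "1 + j \<le> m - j" for j
    using that
  proof (induction j)
    case (Suc j)
    let ?z = "rot n (1 + j) p"
    have "?z \<in> {1..2*n}" by (rule rot_in[OF p])
    moreover have "?z \<notin> C" using Suc.prems by (intro inside) simp_all
    ultimately have "s (rot n 1 (s (rot n 1 ?z))) = ?z" by (rule off)
    then have "s (rot n 1 (s (rot n (1 + Suc j) p))) = ?z" by (simp add: rot_rot)
    then have "rot n 1 (s (rot n (1 + Suc j) p)) = s ?z" by (metis invol)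
    also have "\<dots> = rot n 1 (rot n (m - Suc j) p)"
      using Suc by (simp add: rot_rot Suc_diff_Suc)
    finally show ?case by (rule rot_1_inj)
  qed (use start in simp)
  show ?thesis
  proof (cases "i \<le> m + 1 - i")
    case True
    then show ?thesis using from_ends[of "i - 1"] i by simp
  next
    case False
    then have "s (rot n (m + 1 - i) p) = rot n i p" using from_ends[of "m - i"] i by (simp add: Suc_diff_le)
    then show ?thesis by (metis invol)
  qed
qed

lemma reversed_arc_length_even:
  assumes reverse: "\<And>i. 1 \<le> i \<Longrightarrow> i \<le> m \<Longrightarrow> s (rot n i p) = rot n (m + 1 - i) p"
    and no_fix: "\<And>x. x \<in> {1..2*n} \<Longrightarrow> s x \<noteq> x" and p: "p \<in> {1..2*n}"
  shows "even m"
proof (rule ccontr)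
  assume "odd m"
  then obtain j where "m = 2*j + 1" by (rule oddE)
  then have "s (rot n (j + 1) p) = rot n (j + 1) p" using reverse[of "j + 1"] by simp
  then show False using no_fix rot_in[OF p] by blast
qed

lemma rot_half_turn_commutes_reversal:
  assumes "\<And>i. 1 \<le> i \<Longrightarrow> i \<le> m \<Longrightarrow> s (rot n i p) = rot n (m + 1 - i) p"
    and "\<And>i. 1 \<le> i \<Longrightarrow> i \<le> m \<Longrightarrow> s (rot n i (rot n n p)) = rot n (m + 1 - i) (rot n n p)"
    and "1 \<le> i" "i \<le> m"
  shows "rot n n (s (rot n i p)) = s (rot n n (rot n i p))"
  using assms by (simp add: rot_rot add.commute)

lemma card_image_two_to_one:
  assumes "finite F"
    and R: "\<And>x. x \<in> F \<Longrightarrow> R x \<in> F" "\<And>x. x \<in> F \<Longrightarrow> R x \<noteq> x"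
    and fibre: "\<And>x y. x \<in> F \<Longrightarrow> y \<in> F \<Longrightarrow> g x = g y \<longleftrightarrow> y = x \<or> y = R x"
  shows "card F = 2 * card (g ` F)"
proof -
  have "card {x' \<in> F. g x' = y} = 2" if "y \<in> g ` F" for y
  proof -
    obtain x where x: "x \<in> F" "y = g x" using \<open>y \<in> g ` F\<close> by blast
    then have "{x' \<in> F. g x' = y} = {x, R x}" using R fibre[of x] by (auto simp: eq_commute)
    then show ?thesis using R(2)[OF x(1)] by simp
  qed
  then show ?thesis using sum.image_gen[OF assms(1), of "\<lambda>_. 1 :: nat" g] by simp
qed

section \<open>Special tuples with a 4-cycle\<close>

locale special_four_cycle =
  fixes n h k1 k2 a b :: nat and s0 s1 :: "nat \<Rightarrow> nat"
  assumes special: "special n (s0, std_cycle n, s1, transpose a b)"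
    and increasing: "h < k1" "k1 < k2" "k2 < 2*n - h"
    and cycle: "transpose a b (s1 (2*n - h)) = h" "transpose a b (s1 h) = k1"
      "transpose a b (s1 k1) = k2" "transpose a b (s1 k2) = 2*n - h"
begin

lemma special_components:
  "prod_disj_transp n n s0" "prod_disj_transp n (n - 2) s1"
  "transpose a b \<circ> s1 \<circ> std_cycle n \<circ> s0 = id"
  "s1 (2*n) = 2*n" "transpose a b (2*n) = 2*n"
  using special unfolding special_def admissible_def by simp_all

lemma s0_permutes: "s0 permutes {1..2*n}"
  and s0_involution: "s0 (s0 x) = x"
  and card_s0_moved: "card {x \<in> {1..2*n}. s0 x \<noteq> x} = 2 * n"
  and s1_involution: "s1 (s1 x) = x"
  and card_s1_moved: "card {x \<in> {1..2*n}. s1 x \<noteq> x} = 2 * (n - 2)"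
  using special_components(1,2) unfolding prod_disj_transp_def by (simp_all add: pointfree_idE)

lemma product_id: "transpose a b (s1 (std_cycle n (s0 x))) = x"
  using pointfree_idE[OF special_components(3)] by simp

lemmas s1_top = special_components(4) and transpose_top = special_components(5)

lemma s0_no_fixpoint: "x \<in> {1..2*n} \<Longrightarrow> s0 x \<noteq> x"
proof -
  have "{x \<in> {1..2*n}. s0 x \<noteq> x} = {1..2*n}"
    by (rule card_subset_eq) (use card_s0_moved in auto)
  then show "x \<in> {1..2*n} \<Longrightarrow> s0 x \<noteq> x" by blast
qed

lemma h_pos: "0 < h"
proof (rule ccontr)
  assume "\<not> 0 < h"
  then have "transpose a b (s1 (2*n)) = 0" using cycle(1) by simp
  then show False using s1_top transpose_top increasing by simp
qed

lemma half_bound: "h + 2 \<le> n"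
  using increasing by linarith

lemma transpose_s1_eq: "transpose a b (s1 x) = s0 (rot n 1 x)"
  using product_id[of "s0 (rot n 1 x)"] std_cycle_rot_1[of n x] half_bound
  by (simp add: s0_involution)

lemma ab_diagonal: "{a, b} = {2*n - h, k1} \<or> {a, b} = {h, k2}"
  using transpose_of_four_cycle[OF s1_involution _ cycle] increasing by simp

lemma ab_in: "a \<in> {1..2*n}" "b \<in> {1..2*n}" "a \<noteq> b"
  using ab_diagonal increasing h_pos by (auto simp: doubleton_eq_iff)

lemma s0_off_cycle: "z \<notin> {2*n - h, h, k1, k2} \<Longrightarrow> s0 (rot n 1 (s0 (rot n 1 z))) = z"
proof -
  assume "z \<notin> {2*n - h, h, k1, k2}"
  moreover have "{a, b} \<subseteq> {2*n - h, h, k1, k2}" using ab_diagonal by auto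
  ultimately show ?thesis
    using involution_off_four_cycle[OF s1_involution _ cycle] by (simp add: transpose_s1_eq)
qed

lemma s0_reverses_arc:
  assumes "p \<in> {1..2*n}" "s0 (rot n 1 p) = rot n m p"
    and "\<And>i. 1 \<le> i \<Longrightarrow> i < m \<Longrightarrow> rot n i p \<notin> {2*n - h, h, k1, k2}"
    and "1 \<le> i" "i \<le> m"
  shows "s0 (rot n i p) = rot n (m + 1 - i) p"
  by (rule involution_reverses_arc[OF s0_involution s0_off_cycle assms])

lemma s0_after_cycle:
  "s0 (h + 1) = k1" "s0 (k1 + 1) = k2" "s0 (k2 + 1) = 2*n - h" "s0 (2*n - h + 1) = h"
proof -
  have "1 \<le> h" "h < 2*n" "1 \<le> k1" "k1 < 2*n" "1 \<le> k2" "k2 < 2*n" "1 \<le> 2*n - h" "2*n - h < 2*n"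
    using h_pos increasing by linarith+
  moreover have "rot n 1 x = x + 1" if "1 \<le> x" "x < 2*n" for x
    by (rule rot_eqI) (use that in auto)
  ultimately have "rot n 1 h = h + 1" "rot n 1 k1 = k1 + 1" "rot n 1 k2 = k2 + 1"
    "rot n 1 (2*n - h) = 2*n - h + 1"
    by simp_all
  then show "s0 (h + 1) = k1" "s0 (k1 + 1) = k2" "s0 (k2 + 1) = 2*n - h" "s0 (2*n - h + 1) = h"
    using cycle by (simp_all add: transpose_s1_eq)
qed

lemma even_first_arc: "even (k1 - h)"
proof -
  have h: "h \<in> {1..2*n}" using h_pos increasing by simp
  have "s0 (rot n i h) = rot n (k1 - h + 1 - i) h" if "1 \<le> i" "i \<le> k1 - h" for i
  proof (rule s0_reverses_arc[OF h _ _ that])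
    have "rot n 1 h = h + 1" by (rule rot_eqI) (use h increasing in auto)
    moreover have "rot n (k1 - h) h = k1" by (rule rot_eqI) (use h increasing in auto)
    ultimately show "s0 (rot n 1 h) = rot n (k1 - h) h" using s0_after_cycle(1) by simp
    show "rot n i h \<notin> {2*n - h, h, k1, k2}" if "1 \<le> i" "i < k1 - h" for i
    proof -
      have "rot n i h = h + i" by (rule rot_eqI) (use h_pos increasing that in arith)+
      then show ?thesis using that increasing by (auto; arith)
    qed
  qed
  then show ?thesis by (rule reversed_arc_length_even[OF _ s0_no_fixpoint h])
qed

lemma s1_moves_ab: "x \<in> {a, b} \<Longrightarrow> s1 x \<noteq> x"
proof -
  assume x: "x \<in> {a, b}"
  have s1_cycle: "s1 (2*n - h) = transpose a b h" "s1 h = transpose a b k1"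
    "s1 k1 = transpose a b k2" "s1 k2 = transpose a b (2*n - h)"
    using cycle by (metis transpose_involutory)+
  consider "{a, b} = {2*n - h, k1}" | "{a, b} = {h, k2}" using ab_diagonal by blast
  then show ?thesis
    by cases (use x s1_cycle increasing in \<open>auto simp: doubleton_eq_iff\<close>)
qed

definition fixed_points :: "nat set" where
  "fixed_points = {x \<in> {1..2*n}. s1 x = x \<and> transpose a b x = x}"

lemma card_fixed_points: "card fixed_points = 4"
proof -
  have "fixed_points = {1..2*n} - {x \<in> {1..2*n}. s1 x \<noteq> x}"
    unfolding fixed_points_def using s1_moves_ab by (auto simp: transpose_def)
  also have "card \<dots> = card {1..2*n} - card {x \<in> {1..2*n}. s1 x \<noteq> x}"
    by (rule card_Diff_subset) auto
  finally have "card fixed_points = 2*n - 2 * (n - 2)"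
    using card_s1_moved by simp
  then show ?thesis using half_bound by simp
qed

definition conj_rot :: "nat \<Rightarrow> tuple4" where
  "conj_rot c = conj4 (rot n c) (s0, std_cycle n, s1, transpose a b)"

lemma special_conj_class_eq:
  "{\<Sigma> \<in> conj_class n (s0, std_cycle n, s1, transpose a b). special n \<Sigma>} = conj_rot ` fixed_points"
proof (intro equalityI subsetI)
  fix \<Sigma> assume "\<Sigma> \<in> {\<Sigma> \<in> conj_class n (s0, std_cycle n, s1, transpose a b). special n \<Sigma>}"
  then obtain \<gamma> where g: "\<gamma> permutes {1..2*n}"
    and \<Sigma>: "\<Sigma> = conj4 \<gamma> (s0, std_cycle n, s1, transpose a b)" and "special n \<Sigma>"
    unfolding conj_class_def by blast
  then have "inv \<gamma> \<circ> std_cycle n \<circ> \<gamma> = std_cycle n" "(inv \<gamma> \<circ> s1 \<circ> \<gamma>) (2*n) = 2*n"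
    "(inv \<gamma> \<circ> transpose a b \<circ> \<gamma>) (2*n) = 2*n"
    unfolding special_def conj4_def by simp_all
  then have comm: "\<gamma> \<circ> std_cycle n = std_cycle n \<circ> \<gamma>"
    and top: "s1 (\<gamma> (2*n)) = \<gamma> (2*n)" "transpose a b (\<gamma> (2*n)) = \<gamma> (2*n)"
    by (auto simp: fun_eq_iff permutes_inv_eq[OF g])
  have "\<gamma> = rot n (\<gamma> (2*n))" using commute_std_cycle_imp_rot[OF g _ comm] half_bound by simp
  moreover have "\<gamma> (2*n) \<in> fixed_points"
    using top permutes_in_image[OF g, of "2*n"] half_bound unfolding fixed_points_def by simp
  ultimately show "\<Sigma> \<in> conj_rot ` fixed_points" unfolding \<Sigma> conj_rot_def by (metis image_eqI)
next
  fix \<Sigma> assume "\<Sigma> \<in> conj_rot ` fixed_points"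
  then obtain c where "c \<in> fixed_points" and \<Sigma>: "\<Sigma> = conj_rot c" by blast
  then show "\<Sigma> \<in> {\<Sigma> \<in> conj_class n (s0, std_cycle n, s1, transpose a b). special n \<Sigma>}"
    using special_conj_rot[OF special] rot_permutes
    unfolding fixed_points_def conj_class_def conj_rot_def by auto
qed

definition half_turn_central :: bool where
  "half_turn_central \<longleftrightarrow> rot n n \<circ> s0 = s0 \<circ> rot n n \<and> rot n n \<circ> s1 = s1 \<circ> rot n n
     \<and> rot n n \<circ> transpose a b = transpose a b \<circ> rot n n"

lemma conj_rot_eq_iff:
  assumes c: "c \<in> fixed_points" and c': "c' \<in> fixed_points"
  shows "conj_rot c = conj_rot c' \<longleftrightarrow> c' = c \<or> (c' = rot n n c \<and> half_turn_central)"
proof -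
  define d where "d = c' + (2*n - c)"
  have cD: "c \<in> {1..2*n}" "c' \<in> {1..2*n}" using c c' unfolding fixed_points_def by simp_all
  have d_c: "rot n d c = c'" unfolding d_def by (rule rot_shift[OF cD])
  have "rot n d \<circ> std_cycle n = std_cycle n \<circ> rot n d"
    using half_bound by (simp add: std_cycle_eq_rot rot_commute)
  then have eq_iff: "conj_rot c = conj_rot c' \<longleftrightarrow> rot n d \<circ> s0 = s0 \<circ> rot n d
      \<and> rot n d \<circ> s1 = s1 \<circ> rot n d \<and> rot n d \<circ> transpose a b = transpose a b \<circ> rot n d"
    unfolding conj_rot_def conj4_def d_def by (simp add: rot_conj_eq_iff_commute[OF cD])
  show ?thesis
  proof
    assume "conj_rot c = conj_rot c'"
    moreover have "rot n d = id \<or> rot n d = rot n n"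
      if "rot n d \<circ> transpose a b = transpose a b \<circ> rot n d"
      using rot_commute_transpose_cases[OF _ ab_in that] half_bound by simp
    ultimately show "c' = c \<or> (c' = rot n n c \<and> half_turn_central)"
      using d_c eq_iff unfolding half_turn_central_def by auto
  next
    assume "c' = c \<or> (c' = rot n n c \<and> half_turn_central)"
    moreover have "c' = rot n n c \<Longrightarrow> rot n d = rot n n"
      using rot_eq_if_agree[OF cD(1)] d_c by simp
    ultimately show "conj_rot c = conj_rot c'"
      unfolding half_turn_central_def using eq_iff by auto
  qed
qed

lemma card_special_conj_class:
  "card (conj_rot ` fixed_points) = (if half_turn_central then 2 else 4)"
proof (cases half_turn_central)
  case True
  then have comm: "rot n n (s1 x) = s1 (rot n n x)"
    "rot n n (transpose a b x) = transpose a b (rot n n x)" for x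
    unfolding half_turn_central_def by (metis comp_apply)+
  have "rot n n x \<in> fixed_points" if "x \<in> fixed_points" for x
    using that rot_in unfolding fixed_points_def by (simp flip: comm)
  moreover have "rot n n x \<noteq> x" if "x \<in> fixed_points" for x
    using that rot_half_turn_moves unfolding fixed_points_def by simp
  ultimately have "card fixed_points = 2 * card (conj_rot ` fixed_points)"
    using True by (intro card_image_two_to_one) (simp_all add: conj_rot_eq_iff fixed_points_def)
  then show ?thesis using True card_fixed_points by simp
next
  case False
  then have "inj_on conj_rot fixed_points" by (auto intro: inj_onI simp: conj_rot_eq_iff)
  then show ?thesis using False card_fixed_points by (simp add: card_image)
qed

lemma half_turn_cycle_points:
  "rot n n (2*n - h) = n - h" "rot n n h = n + h" "rot n n (n - h) = 2*n - h" "rot n n (n + h) = h"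
proof -
  show "rot n n (2*n - h) = n - h" by (rule rot_eqI) (use half_bound h_pos in arith)+
  show "rot n n h = n + h" by (rule rot_eqI) (use half_bound h_pos in arith)+
  show "rot n n (n - h) = 2*n - h" by (rule rot_eqI) (use half_bound h_pos in arith)+
  show "rot n n (n + h) = h" by (rule rot_eqI) (use half_bound h_pos in arith)+
qed

lemma central_imp_antipodal:
  assumes half_turn_central
  shows "k1 = n - h \<and> k2 = n + h"
proof -
  have comm: "rot n n (s0 x) = s0 (rot n n x)"
    "rot n n (transpose a b x) = transpose a b (rot n n x)" for x
    using assms unfolding half_turn_central_def by (metis comp_apply)+
  have "inj (rot n n)" using rot_permutes permutes_inj by blast
  then have "rot n n a = b"
    by (rule commute_transpose_swaps[OF _ comm(2) rot_half_turn_moves[OF ab_in(1)] ab_in(3)])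
  then have swap: "rot n n a = b" "rot n n b = a" using rot_half_turn_involution by metis+
  have s0_inj: "s0 x = s0 y \<Longrightarrow> x = y" for x y by (metis s0_involution)
  consider "{a, b} = {2*n - h, k1}" | "{a, b} = {h, k2}" using ab_diagonal by blast
  then show ?thesis
  proof cases
    case 1
    then have k1: "k1 = n - h"
      using swap half_turn_cycle_points(1) by (auto simp: doubleton_eq_iff)
    have "rot n n (h + 1) = n + h + 1" by (rule rot_eqI) (use half_bound in arith)+
    then have "s0 (n + h + 1) = s0 (k2 + 1)"
      using comm(1)[of "h + 1"] s0_after_cycle(1,3) k1 half_turn_cycle_points(3) by simp
    with k1 show ?thesis using s0_inj by fastforce
  next
    case 2
    then have k2: "k2 = n + h"
      using swap half_turn_cycle_points(2) by (auto simp: doubleton_eq_iff)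
    have "rot n n (2*n - h + 1) = n - h + 1" by (rule rot_eqI) (use half_bound h_pos in arith)+
    then have "s0 (n - h + 1) = s0 (k1 + 1)"
      using comm(1)[of "2*n - h + 1"] s0_after_cycle(2,4) k2 half_turn_cycle_points(2) by simp
    with k2 show ?thesis using s0_inj increasing by fastforce
  qed
qed

end

locale antipodal_four_cycle = special_four_cycle +
  assumes antipodal: "k1 = n - h" "k2 = n + h"
begin

definition gap :: nat where
  "gap = k1 - h"

lemma antipodal_gap: "n = 2*h + gap" "0 < gap" "k1 = h + gap" "k2 = 3*h + gap" "2*n - h = 3*h + 2*gap"
  using increasing antipodal unfolding gap_def by auto

(* (p, m) stands for the arc of the m points following p; these are the four arcs between
   consecutive points of the 4-cycle, written without truncated subtraction. *)
definition arcs :: "(nat \<times> nat) set" where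
  "arcs = {(h, gap), (h + gap, 2*h), (3*h + gap, gap), (3*h + 2*gap, 2*h)}"

lemma arcs_reversed:
  assumes "(p, m) \<in> arcs" "1 \<le> i" "i \<le> m"
  shows "s0 (rot n i p) = rot n (m + 1 - i) p"
proof (rule s0_reverses_arc[OF _ _ _ assms(2,3)])
  show "p \<in> {1..2*n}" using assms(1) h_pos antipodal_gap by (auto simp: arcs_def)
  show "s0 (rot n 1 p) = rot n m p"
    using assms(1) h_pos s0_after_cycle antipodal_gap by (auto simp: arcs_def rot_apply)
  show "rot n j p \<notin> {2*n - h, h, k1, k2}" if "1 \<le> j" "j < m" for j
    using assms(1) that h_pos antipodal_gap by (auto simp: arcs_def rot_apply split: if_splits)
qed

lemma arcs_cover:
  assumes "x \<in> {1..2*n}"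
  shows "\<exists>(p, m) \<in> arcs. \<exists>i. 1 \<le> i \<and> i \<le> m \<and> x = rot n i p"
proof -
  have "\<exists>i. 1 \<le> i \<and> i \<le> m \<and> x = rot n i p" if "(p, m) \<in> arcs" "p < x" "x \<le> p + m" for p m
    using that assms h_pos antipodal_gap
    by (intro exI[of _ "x - p"]) (auto simp: arcs_def rot_apply)
  moreover have "\<exists>i. 1 \<le> i \<and> i \<le> 2*h \<and> x = rot n i (3*h + 2*gap)" if "x \<le> h"
    using that assms h_pos antipodal_gap
    by (intro exI[of _ "x + h"]) (auto simp: rot_apply)
  moreover have "(h, gap) \<in> arcs" "(h + gap, 2*h) \<in> arcs" "(3*h + gap, gap) \<in> arcs"
    "(3*h + 2*gap, 2*h) \<in> arcs"
    by (simp_all add: arcs_def)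
  moreover have "x \<le> h \<or> h < x \<and> x \<le> h + gap \<or> h + gap < x \<and> x \<le> h + gap + 2*h
      \<or> 3*h + gap < x \<and> x \<le> 3*h + gap + gap \<or> 3*h + 2*gap < x \<and> x \<le> 3*h + 2*gap + 2*h"
    using assms antipodal_gap by auto
  ultimately show ?thesis by blast
qed

lemma arcs_half_turn: "(p, m) \<in> arcs \<Longrightarrow> (rot n n p, m) \<in> arcs"
proof -
  have "rot n n h = 3*h + gap" "rot n n (h + gap) = 3*h + 2*gap"
    "rot n n (3*h + gap) = h" "rot n n (3*h + 2*gap) = h + gap"
    using h_pos antipodal_gap(1) by (simp_all add: rot_apply)
  then show "(p, m) \<in> arcs \<Longrightarrow> (rot n n p, m) \<in> arcs" unfolding arcs_def by auto
qed

lemma half_turn_commutes_s0: "rot n n (s0 x) = s0 (rot n n x)"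
proof (cases "x \<in> {1..2*n}")
  case True
  then obtain p m i where "(p, m) \<in> arcs" "1 \<le> i" "i \<le> m" "x = rot n i p"
    using arcs_cover by blast
  then show ?thesis
    using rot_half_turn_commutes_reversal[OF arcs_reversed arcs_reversed]
      arcs_half_turn by blast
next
  case False
  then show ?thesis using s0_permutes by (simp add: permutes_not_in rot_out)
qed

lemma half_turn_commutes_transpose: "rot n n (transpose a b x) = transpose a b (rot n n x)"
proof (rule swap_commutes_transpose[OF rot_half_turn_involution])
  have "rot n n a = b \<and> rot n n b = a"
    using ab_diagonal half_turn_cycle_points antipodal by (auto simp: doubleton_eq_iff)
  then show "rot n n a = b" "rot n n b = a" by simp_all
qed

lemma half_turn_is_central: half_turn_central
proof -
  have s1_eq: "s1 x = transpose a b (s0 (rot n 1 x))" for x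
    by (metis transpose_s1_eq transpose_involutory)
  have "rot n n (s1 x) = s1 (rot n n x)" for x
    unfolding s1_eq by (simp add: half_turn_commutes_transpose half_turn_commutes_s0 rot_rot add.commute)
  then show ?thesis unfolding half_turn_central_def
    by (simp add: fun_eq_iff half_turn_commutes_s0 half_turn_commutes_transpose)
qed

end

lemma (in special_four_cycle) half_turn_central_iff:
  "half_turn_central \<longleftrightarrow> even n \<and> k1 = n - h \<and> k2 = n + h"
proof
  assume half_turn_central
  then have "k1 = n - h" "k2 = n + h" using central_imp_antipodal by simp_all
  moreover have "even (n - 2*h)" using even_first_arc \<open>k1 = n - h\<close> by (simp add: diff_diff_add mult_2)
  ultimately show "even n \<and> k1 = n - h \<and> k2 = n + h"
    using increasing by (auto simp: even_diff_nat)
next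
  assume "even n \<and> k1 = n - h \<and> k2 = n + h"
  then interpret antipodal_four_cycle n h k1 k2 a b s0 s1
    by (intro antipodal_four_cycle.intro special_four_cycle_axioms antipodal_four_cycle_axioms.intro) simp_all
  show half_turn_central by (rule half_turn_is_central)
qed

theorem proposition8:
  fixes n h k1 k2 :: nat and s0 sinf s1 t :: "nat \<Rightarrow> nat"
  assumes "special n (s0, sinf, s1, t)"
    and "h < k1" and "k1 < k2" and "k2 < 2*n - h"
    and "t (s1 (2*n - h)) = h" and "t (s1 h) = k1"
    and "t (s1 k1) = k2" and "t (s1 k2) = 2*n - h"
  shows "card {\<Sigma> \<in> conj_class n (s0, sinf, s1, t). special n \<Sigma>}
           = (if even n \<and> k1 = n - h \<and> k2 = n + h then 2 else 4)"
proof -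
  have sinf: "sinf = std_cycle n" using assms(1) unfolding special_def by simp
  obtain a b where t: "t = transpose a b"
    using assms(1) unfolding special_def admissible_def is_transp_def by auto
  interpret special_four_cycle n h k1 k2 a b s0 s1
    using assms by unfold_locales (simp_all add: sinf t)
  show ?thesis
    using special_conj_class_eq card_special_conj_class half_turn_central_iff by (simp add: sinf t)
qed

end
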